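(* For $(\sigma,u)\in\mathbb R\times\mathbb R^3$ let $R=R(\sigma,u)=2(uu^\top-\sigma[u]_\times)+(\sigma^2-\|u\|^2)I$. For vectors $q_s',q_s''\in\mathbb R^3$, $s\in\{i,j,k\}$, define: - $G_{ijk}$: the $3\times 3$ matrix with rows $(Rq_i'\times q_i'')^\top$, $(Rq_j'\times q_j'')^\top$, $(Rq_k'\times q_k'')^\top$; - for $l\in\{j,k\}$, the $1\times 2$ row $F_{il}=\big[\,q_l''^\top R[q_i']_\times q_l',\ \ -q_l''^\top [q_i'']_\times R\, q_l'\,\big]$, and $F_{ijk}=\begin{bmatrix}F_{ij}\\ F_{ik}\end{bmatrix}$ (a $2\times2$ matrix). Then, as an identity in $(\sigma,u)$ (up to a global sign), $$\det G_{ijk}=\pm(\|u\|^2+\sigma^2)\,\det F_{ijk}.$$ In particular, setting $\sigma=1$ and $u=v$, the same identity holds with the factor $\|v\|^2+1$.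
   Context: $[a]_\times$ is the skew-symmetric matrix with $[a]_\times b=a\times b$. When $\|u\|^2+\sigma^2=1$, $R(\sigma,u)$ is the rotation matrix of the unit quaternion $[\sigma\ u^\top]$; in general $R(\sigma,u)$ equals $(\sigma^2+\|u\|^2)$ times a rotation matrix. $F_{il}$ arises by substituting $t'=\lambda_i q_i'$, $t''=\mu_i q_i''$ into the epipolar constraint $q_l''^\top(R[t']_\times-[t'']_\times R)q_l'=0$, giving $F_{il}[\lambda_i\ \mu_i]^\top=0$. *)

theory Defs
  imports "HOL-Analysis.Analysis" "HOL-Analysis.Cross3"
begin

definition skew :: "real^3 \<Rightarrow> real^3^3" where
  "skew a = vector [vector [0, - a$3, a$2], vector [a$3, 0, - a$1], vector [- a$2, a$1, 0]]"

definition outer :: "real^3 \<Rightarrow> real^3 \<Rightarrow> real^3^3" where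
  "outer a b = (\<chi> i j. a$i * b$j)"

definition Rot :: "real \<Rightarrow> real^3 \<Rightarrow> real^3^3" where
  "Rot \<sigma> u = 2 *\<^sub>R (outer u u - \<sigma> *\<^sub>R skew u) + (\<sigma>\<^sup>2 - (norm u)\<^sup>2) *\<^sub>R mat 1"

definition Gmat :: "real \<Rightarrow> real^3 \<Rightarrow> real^3 \<Rightarrow> real^3 \<Rightarrow> real^3 \<Rightarrow> real^3 \<Rightarrow> real^3 \<Rightarrow> real^3 \<Rightarrow> real^3^3" where
  "Gmat \<sigma> u qi' qi'' qj' qj'' qk' qk'' =
     vector [cross3 (Rot \<sigma> u *v qi') qi'', cross3 (Rot \<sigma> u *v qj') qj'', cross3 (Rot \<sigma> u *v qk') qk'']"

definition Frow :: "real \<Rightarrow> real^3 \<Rightarrow> real^3 \<Rightarrow> real^3 \<Rightarrow> real^3 \<Rightarrow> real^3 \<Rightarrow> real^2" where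
  "Frow \<sigma> u qi' qi'' ql' ql'' =
     vector [ql'' \<bullet> ((Rot \<sigma> u ** skew qi') *v ql'), - (ql'' \<bullet> ((skew qi'' ** Rot \<sigma> u) *v ql'))]"

definition Fmat :: "real \<Rightarrow> real^3 \<Rightarrow> real^3 \<Rightarrow> real^3 \<Rightarrow> real^3 \<Rightarrow> real^3 \<Rightarrow> real^3 \<Rightarrow> real^3 \<Rightarrow> real^2^2" where
  "Fmat \<sigma> u qi' qi'' qj' qj'' qk' qk'' =
     vector [Frow \<sigma> u qi' qi'' qj' qj'', Frow \<sigma> u qi' qi'' qk' qk'']"

end

theory Submission
  imports Defs
begin

text \<open>\<open>R(\<sigma>,u)\<close> is \<open>\<rho> = \<parallel>u\<parallel>\<^sup>2 + \<sigma>\<^sup>2\<close> times a rotation, so \<open>R x \<times> R y = \<rho> R (x \<times> y)\<close>.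
  Hence \<open>\<rho>\<close> times the first entry of \<open>F\<^sub>i\<^sub>l\<close> is the triple product \<open>q\<^sub>l''\<bullet>(Rq\<^sub>i' \<times> Rq\<^sub>l')\<close>,
  and the second entry is \<open>-q\<^sub>l''\<bullet>(q\<^sub>i'' \<times> Rq\<^sub>l')\<close>. On the other side, the determinant of
  three cross products \<open>a \<times> b, c \<times> d, e \<times> f\<close> expands (Lagrange identity) into exactly
  such triple products, which gives \<open>det G = -\<rho> det F\<close>.\<close>

lemma skew_mult_vec: "skew a *v b = cross3 a b"
  by (simp add: skew_def vec_eq_iff forall_3 matrix_vector_mult_def sum_3 cross3_simps algebra_simps)

lemma norm_vec3_squared: "(norm (u::real^3))\<^sup>2 = u$1*u$1 + u$2*u$2 + u$3*u$3"
  by (simp add: power2_norm_eq_inner inner_vec_def sum_3)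

lemma Rot_mult_vec: "Rot \<sigma> u *v x = vector [
  (\<sigma>*\<sigma>+u$1*u$1-u$2*u$2-u$3*u$3)*x$1 + 2*(u$1*u$2+\<sigma>*u$3)*x$2 + 2*(u$1*u$3-\<sigma>*u$2)*x$3,
  2*(u$2*u$1-\<sigma>*u$3)*x$1 + (\<sigma>*\<sigma>-u$1*u$1+u$2*u$2-u$3*u$3)*x$2 + 2*(u$2*u$3+\<sigma>*u$1)*x$3,
  2*(u$3*u$1+\<sigma>*u$2)*x$1 + 2*(u$3*u$2-\<sigma>*u$1)*x$2 + (\<sigma>*\<sigma>-u$1*u$1-u$2*u$2+u$3*u$3)*x$3]"
  unfolding vec_eq_iff forall_3 Rot_def norm_vec3_squared
  by (simp add: outer_def skew_def matrix_vector_mult_def sum_3 mat_def power2_eq_square algebra_simps)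

lemma cross3_Rot:
  "cross3 (Rot \<sigma> u *v x) (Rot \<sigma> u *v y) = ((norm u)\<^sup>2 + \<sigma>\<^sup>2) *\<^sub>R (Rot \<sigma> u *v cross3 x y)"
  unfolding Rot_mult_vec vec_eq_iff forall_3 norm_vec3_squared
  by (simp add: cross3_simps; algebra)

lemma det_cross3_rows:
  fixes a b c d e f :: "real^3"
  shows "det (vector [cross3 a b, cross3 c d, cross3 e f] :: real^3^3) =
    (d \<bullet> cross3 a c) * (f \<bullet> cross3 b e) - (d \<bullet> cross3 b c) * (f \<bullet> cross3 a e)"
  by (simp add: det_3 cross3_simps inner_vec_def sum_3; algebra)

lemma Frow_first_scaled:
  "((norm u)\<^sup>2 + \<sigma>\<^sup>2) * (Frow \<sigma> u qi' qi'' ql' ql'' $ 1) =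
     ql'' \<bullet> cross3 (Rot \<sigma> u *v qi') (Rot \<sigma> u *v ql')"
  by (simp add: Frow_def cross3_Rot matrix_vector_mul_assoc[symmetric] skew_mult_vec)

lemma Frow_second:
  "Frow \<sigma> u qi' qi'' ql' ql'' $ 2 = - (ql'' \<bullet> cross3 qi'' (Rot \<sigma> u *v ql'))"
  by (simp add: Frow_def matrix_vector_mul_assoc[symmetric] skew_mult_vec)

lemma det_Gmat_eq_det_Fmat:
  "det (Gmat \<sigma> u qi' qi'' qj' qj'' qk' qk'') =
     - ((norm u)\<^sup>2 + \<sigma>\<^sup>2) * det (Fmat \<sigma> u qi' qi'' qj' qj'' qk' qk'')"
proof -
  let ?\<rho> = "(norm u)\<^sup>2 + \<sigma>\<^sup>2"
  let ?Fj = "Frow \<sigma> u qi' qi'' qj' qj''" and ?Fk = "Frow \<sigma> u qi' qi'' qk' qk''"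
  have "det (Gmat \<sigma> u qi' qi'' qj' qj'' qk' qk'') =
          (?\<rho> * ?Fj$1) * (- ?Fk$2) - (- ?Fj$2) * (?\<rho> * ?Fk$1)"
    unfolding Gmat_def det_cross3_rows Frow_first_scaled Frow_second by simp
  also have "\<dots> = - ?\<rho> * det (Fmat \<sigma> u qi' qi'' qj' qj'' qk' qk'')"
    by (simp add: Fmat_def det_2 algebra_simps)
  finally show ?thesis .
qed

theorem theorem3:
  shows "\<exists>c \<in> {1, -1::real}.
    (\<forall>\<sigma> u qi' qi'' qj' qj'' qk' qk''.
       det (Gmat \<sigma> u qi' qi'' qj' qj'' qk' qk'') =
       c * ((norm u)\<^sup>2 + \<sigma>\<^sup>2) * det (Fmat \<sigma> u qi' qi'' qj' qj'' qk' qk'')) \<and>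
    (\<forall>v qi' qi'' qj' qj'' qk' qk''.
       det (Gmat 1 v qi' qi'' qj' qj'' qk' qk'') =
       c * ((norm v)\<^sup>2 + 1) * det (Fmat 1 v qi' qi'' qj' qj'' qk' qk''))"
proof (rule bexI[where x = "-1"])
  show "-1 \<in> {1, -1::real}" by simp
qed (simp add: det_Gmat_eq_det_Fmat)

end
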